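(* For every instance of MCND that has a feasible solution and every partial aggregation $\mathcal{B}$ (see context), the optimal values of the LP relaxations of the PA, PAi and PAe formulations built on $\mathcal{B}$ are each lower bounds on the optimal value of MCND.
   Context: An instance of MCND consists of a directed graph $G=(\mathcal{N},\mathcal{A})$, a finite set $\mathcal{K}$ of commodities, each $k\in\mathcal{K}$ having an origin $o^k\in\mathcal{N}$, a destination $s^k\in\mathcal{N}$ and a demand $d^k\ge 0$, and for each arc $(i,j)\in\mathcal{A}$ a capacity $u_{ij}$, a per-unit flow cost $c_{ij}$ and a fixed cost $f_{ij}$, all nonnegative. Let $o_i^k=1$ if $i=o^k$ and $0$ otherwise, $s_i^k=1$ if $i=s^k$ and $0$ otherwise, $\mathcal{N}_i^+=\{j:(i,j)\in\mathcal{A}\}$, $\mathcal{N}_i^-=\{j:(j,i)\in\mathcal{A}\}$. MCND: minimize $\sum_{k}\sum_{(i,j)}c_{ij}x_{ij}^k+\sum_{(i,j)}f_{ij}y_{ij}$ over $x_{ij}^k\ge0$, $y_{ij}\in\{0,1\}$, subject to $\sum_{j\in\mathcal{N}_i^+}x_{ij}^k-\sum_{j\in\mathcal{N}_i^-}x_{ji}^k=(o_i^k-s_i^k)d^k$ for all $k,i$; $\sum_k x_{ij}^k\le u_{ij}y_{ij}$ for all $(i,j)$; $x_{ij}^k\le d^k y_{ij}$ for all $k,(i,j)$. Dispersion: a nonempty set $\mathcal{K}_b\subseteq\mathcal{K}$ of commodities sharing a common origin, together with, for every arc $(i,j)\in\mathcal{A}$, a partition of $\mathcal{K}_b$ into $\mathcal{K}_b^{ij}$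 (aggregated on $(i,j)$) and $\mathcal{D}_b^{ij}$ (disaggregated on $(i,j)$); either part may be empty. Let $\mathcal{G}_b^{ij}$ be the family consisting of the set $\mathcal{K}_b^{ij}$ (if nonempty) together with the singletons $\{k\}$, $k\in\mathcal{D}_b^{ij}$. A partial aggregation is a set $\mathcal{B}$ of dispersions such that every $k\in\mathcal{K}$ lies in $\mathcal{K}_b$ for exactly one $b\in\mathcal{B}$. LP relaxation of PA (for $\mathcal{B}$): variables $x_{ij}^D\ge0$ for $(i,j)\in\mathcal{A}$, $b\in\mathcal{B}$, $D\in\mathcal{G}_b^{ij}$ (since the $\mathcal{K}_b$ are disjoint, $D$ determines $b$), and $0\le y_{ij}\le1$; minimize $\sum_{(i,j)}c_{ij}\sum_{b}\sum_{D\in\mathcal{G}_b^{ij}}x_{ij}^D+\sum_{(i,j)}f_{ij}y_{ij}$ subject to: for all $b\in\mathcal{B}$, $i\in\mathcal{N}$: $\sum_{j\in\mathcal{N}_i^+}\sum_{D\in\mathcal{G}_b^{ij}}x_{ij}^D-\sum_{j\in\mathcal{N}_i^-}\sum_{D\in\mathcal{G}_b^{ji}}x_{ji}^D=\sum_{k\in\mathcal{K}_b}(o_i^k-s_i^k)d^k$; for all $(i,j)$: $\sum_b\sum_{D\in\mathcal{G}_b^{ij}}x_{ij}^D\le u_{ij}y_{ij}$; for all $(i,j),b,D\in\mathcal{G}_b^{ij}$: $x_{ij}^D\le(\sum_{k\in D}d^k)y_{ij}$. LP relaxation of PAi: the PA LP plus, for all $b\in\mathcal{B}$, $k\in\mathcal{K}_b$,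 $i\in\mathcal{N}$: $\sum_{j\in\mathcal{N}_i^+}\sum_{D\in\mathcal{G}_b^{ij}:k\in D}x_{ij}^D-\sum_{j\in\mathcal{N}_i^-}\sum_{D\in\mathcal{G}_b^{ji}:D=\{k\}}x_{ji}^D\ge(o_i^k-s_i^k)d^k$ and $\sum_{j\in\mathcal{N}_i^+}\sum_{D\in\mathcal{G}_b^{ij}:D=\{k\}}x_{ij}^D-\sum_{j\in\mathcal{N}_i^-}\sum_{D\in\mathcal{G}_b^{ji}:k\in D}x_{ji}^D\le(o_i^k-s_i^k)d^k$. LP relaxation of PAe: the PA LP plus the following. For $b\in\mathcal{B}$, $i\in\mathcal{N}$ let $\mathcal{L}_b^i=\{k\in\mathcal{K}_b:k\in\mathcal{D}_b^{ji}\text{ for some }j\in\mathcal{N}_i^-\text{ or }k\in\mathcal{D}_b^{ij}\text{ for some }j\in\mathcal{N}_i^+\}$; $\mathcal{M}_b^i=\{\{k\}:k\in\mathcal{L}_b^i\}\cup\{\mathcal{K}_b\setminus\mathcal{L}_b^i\}$ (the last set only if nonempty); $\check{\mathcal{T}}_b^i$ = the set of distinct nonempty sets among $\{\mathcal{K}_b^{ji}:j\in\mathcal{N}_i^-\}$; $\hat{\mathcal{T}}_b^i$ = the set of distinct nonempty sets among $\{\mathcal{K}_b^{ij}:j\in\mathcal{N}_i^+\}$. For every $(b,i)$ with $\mathcal{L}_b^i\neq\emptyset$ add variables $z_{CD}^{ib}\ge0$ for $C\in\check{\mathcal{T}}_b^i$, $D\in\mathcal{M}_b^i$ with $C\cap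 D\ne\emptyset$, and $z_{DC}^{ib}\ge0$ for $D\in\mathcal{M}_b^i$, $C\in\hat{\mathcal{T}}_b^i$ with $C\cap D\neq\emptyset$ (zero cost), and constraints: for each $D\in\mathcal{M}_b^i$: $\sum_{j\in\mathcal{N}_i^+:\,D=\{k\},k\in\mathcal{D}_b^{ij}}x_{ij}^{D}-\sum_{j\in\mathcal{N}_i^-:\,D=\{k\},k\in\mathcal{D}_b^{ji}}x_{ji}^{D}+\sum_{C\in\hat{\mathcal{T}}_b^i:C\cap D\neq\emptyset}z_{DC}^{ib}-\sum_{C\in\check{\mathcal{T}}_b^i:C\cap D\ne\emptyset}z_{CD}^{ib}=\sum_{k\in D}(o_i^k-s_i^k)d^k$; for each $C\in\check{\mathcal{T}}_b^i$: $\sum_{D\in\mathcal{M}_b^i:C\cap D\ne\emptyset}z_{CD}^{ib}-\sum_{j\in\mathcal{N}_i^-:\mathcal{K}_b^{ji}=C}x_{ji}^C=0$; for each $C\in\hat{\mathcal{T}}_b^i$: $\sum_{j\in\mathcal{N}_i^+:\mathcal{K}_b^{ij}=C}x_{ij}^C-\sum_{D\in\mathcal{M}_b^i:C\cap D\neq\emptyset}z_{DC}^{ib}=0$. The objective is that of PA. *)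

theory Defs
  imports Complex_Main
begin

record ('n, 'k) mcnd =
  nodes :: "'n set"
  arcs  :: "('n \<times> 'n) set"
  comms :: "'k set"
  orig  :: "'k \<Rightarrow> 'n"
  dest  :: "'k \<Rightarrow> 'n"
  dem   :: "'k \<Rightarrow> real"
  cap   :: "'n \<times> 'n \<Rightarrow> real"
  ucost :: "'n \<times> 'n \<Rightarrow> real"
  fcost :: "'n \<times> 'n \<Rightarrow> real"

definition wf_instance :: "('n, 'k) mcnd \<Rightarrow> bool" where
  "wf_instance I \<longleftrightarrow> finite (nodes I) \<and> finite (comms I) \<and> arcs I \<subseteq> nodes I \<times> nodes I
     \<and> (\<forall>k\<in>comms I. orig I k \<in> nodes I \<and> dest I k \<in> nodes I \<and> dem I k \<ge> 0)
     \<and> (\<forall>a\<in>arcs I. cap I a \<ge> 0 \<and> ucost I a \<ge> 0 \<and> fcost I a \<ge> 0)"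

definition outN :: "('n, 'k) mcnd \<Rightarrow> 'n \<Rightarrow> 'n set" where
  "outN I i = {j. (i, j) \<in> arcs I}"

definition inN :: "('n, 'k) mcnd \<Rightarrow> 'n \<Rightarrow> 'n set" where
  "inN I i = {j. (j, i) \<in> arcs I}"

definition rhs :: "('n, 'k) mcnd \<Rightarrow> 'k \<Rightarrow> 'n \<Rightarrow> real" where
  "rhs I k i = ((if i = orig I k then 1 else 0) - (if i = dest I k then 1 else 0)) * dem I k"

definition mcnd_feasible :: "('n, 'k) mcnd \<Rightarrow> ('k \<Rightarrow> 'n \<times> 'n \<Rightarrow> real) \<Rightarrow> ('n \<times> 'n \<Rightarrow> real) \<Rightarrow> bool" where
  "mcnd_feasible I x y \<longleftrightarrow>
     (\<forall>k\<in>comms I. \<forall>a\<in>arcs I. x k a \<ge> 0)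
   \<and> (\<forall>a\<in>arcs I. y a \<in> {0, 1})
   \<and> (\<forall>k\<in>comms I. \<forall>i\<in>nodes I.
        (\<Sum>j\<in>outN I i. x k (i, j)) - (\<Sum>j\<in>inN I i. x k (j, i)) = rhs I k i)
   \<and> (\<forall>a\<in>arcs I. (\<Sum>k\<in>comms I. x k a) \<le> cap I a * y a)
   \<and> (\<forall>k\<in>comms I. \<forall>a\<in>arcs I. x k a \<le> dem I k * y a)"

definition mcnd_cost :: "('n, 'k) mcnd \<Rightarrow> ('k \<Rightarrow> 'n \<times> 'n \<Rightarrow> real) \<Rightarrow> ('n \<times> 'n \<Rightarrow> real) \<Rightarrow> real" where
  "mcnd_cost I x y = (\<Sum>a\<in>arcs I. ucost I a * (\<Sum>k\<in>comms I. x k a)) + (\<Sum>a\<in>arcs I. fcost I a * y a)"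

definition mcnd_opt :: "('n, 'k) mcnd \<Rightarrow> real" where
  "mcnd_opt I = Inf {mcnd_cost I x y | x y. mcnd_feasible I x y}"

text \<open>A dispersion is a pair (K_b, agg) where agg a = K_b^{a} is the set of commodities
  aggregated on arc a; the disaggregated ones are K_b - agg a.\<close>
type_synonym ('n, 'k) dispersion = "'k set \<times> ('n \<times> 'n \<Rightarrow> 'k set)"

definition is_dispersion :: "('n, 'k) mcnd \<Rightarrow> ('n, 'k) dispersion \<Rightarrow> bool" where
  "is_dispersion I b \<longleftrightarrow> fst b \<noteq> {} \<and> fst b \<subseteq> comms I
     \<and> (\<exists>v. \<forall>k\<in>fst b. orig I k = v)
     \<and> (\<forall>a\<in>arcs I. snd b a \<subseteq> fst b)"

definition partial_aggregation :: "('n, 'k) mcnd \<Rightarrow> ('n, 'k) dispersion set \<Rightarrow> bool" where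
  "partial_aggregation I B \<longleftrightarrow> (\<forall>b\<in>B. is_dispersion I b) \<and> (\<forall>k\<in>comms I. \<exists>!b. b \<in> B \<and> k \<in> fst b)"

definition disagg :: "('n, 'k) dispersion \<Rightarrow> 'n \<times> 'n \<Rightarrow> 'k set" where
  "disagg b a = fst b - snd b a"

definition Gfam :: "('n, 'k) dispersion \<Rightarrow> 'n \<times> 'n \<Rightarrow> 'k set set" where
  "Gfam b a = (if snd b a = {} then {} else {snd b a}) \<union> (\<lambda>k. {k}) ` disagg b a"

definition flowb :: "('n, 'k) dispersion \<Rightarrow> 'n \<times> 'n \<Rightarrow> ('n \<times> 'n \<Rightarrow> 'k set \<Rightarrow> real) \<Rightarrow> real" where
  "flowb b a x = (\<Sum>D\<in>Gfam b a. x a D)"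

definition pa_feasible :: "('n, 'k) mcnd \<Rightarrow> ('n, 'k) dispersion set
    \<Rightarrow> ('n \<times> 'n \<Rightarrow> 'k set \<Rightarrow> real) \<Rightarrow> ('n \<times> 'n \<Rightarrow> real) \<Rightarrow> bool" where
  "pa_feasible I B x y \<longleftrightarrow>
     (\<forall>a\<in>arcs I. 0 \<le> y a \<and> y a \<le> 1)
   \<and> (\<forall>a\<in>arcs I. \<forall>b\<in>B. \<forall>D\<in>Gfam b a. x a D \<ge> 0)
   \<and> (\<forall>b\<in>B. \<forall>i\<in>nodes I.
        (\<Sum>j\<in>outN I i. flowb b (i, j) x) - (\<Sum>j\<in>inN I i. flowb b (j, i) x)
          = (\<Sum>k\<in>fst b. rhs I k i))
   \<and> (\<forall>a\<in>arcs I. (\<Sum>b\<in>B. flowb b a x) \<le> cap I a * y a)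
   \<and> (\<forall>a\<in>arcs I. \<forall>b\<in>B. \<forall>D\<in>Gfam b a. x a D \<le> (\<Sum>k\<in>D. dem I k) * y a)"

definition pa_obj :: "('n, 'k) mcnd \<Rightarrow> ('n, 'k) dispersion set
    \<Rightarrow> ('n \<times> 'n \<Rightarrow> 'k set \<Rightarrow> real) \<Rightarrow> ('n \<times> 'n \<Rightarrow> real) \<Rightarrow> real" where
  "pa_obj I B x y = (\<Sum>a\<in>arcs I. ucost I a * (\<Sum>b\<in>B. flowb b a x)) + (\<Sum>a\<in>arcs I. fcost I a * y a)"

definition pa_lp_opt :: "('n, 'k) mcnd \<Rightarrow> ('n, 'k) dispersion set \<Rightarrow> real" where
  "pa_lp_opt I B = Inf {pa_obj I B x y | x y. pa_feasible I B x y}"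

definition pai_feasible :: "('n, 'k) mcnd \<Rightarrow> ('n, 'k) dispersion set
    \<Rightarrow> ('n \<times> 'n \<Rightarrow> 'k set \<Rightarrow> real) \<Rightarrow> ('n \<times> 'n \<Rightarrow> real) \<Rightarrow> bool" where
  "pai_feasible I B x y \<longleftrightarrow> pa_feasible I B x y
   \<and> (\<forall>b\<in>B. \<forall>k\<in>fst b. \<forall>i\<in>nodes I.
        (\<Sum>j\<in>outN I i. \<Sum>D\<in>{D\<in>Gfam b (i, j). k \<in> D}. x (i, j) D)
        - (\<Sum>j\<in>inN I i. \<Sum>D\<in>{D\<in>Gfam b (j, i). D = {k}}. x (j, i) D) \<ge> rhs I k i
      \<and> (\<Sum>j\<in>outN I i. \<Sum>D\<in>{D\<in>Gfam b (i, j). D = {k}}. x (i, j) D)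
        - (\<Sum>j\<in>inN I i. \<Sum>D\<in>{D\<in>Gfam b (j, i). k \<in> D}. x (j, i) D) \<le> rhs I k i)"

definition pai_lp_opt :: "('n, 'k) mcnd \<Rightarrow> ('n, 'k) dispersion set \<Rightarrow> real" where
  "pai_lp_opt I B = Inf {pa_obj I B x y | x y. pai_feasible I B x y}"

definition Lset :: "('n, 'k) mcnd \<Rightarrow> ('n, 'k) dispersion \<Rightarrow> 'n \<Rightarrow> 'k set" where
  "Lset I b i = {k\<in>fst b. (\<exists>j\<in>inN I i. k \<in> disagg b (j, i)) \<or> (\<exists>j\<in>outN I i. k \<in> disagg b (i, j))}"

definition Mset :: "('n, 'k) mcnd \<Rightarrow> ('n, 'k) dispersion \<Rightarrow> 'n \<Rightarrow> 'k set set" where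
  "Mset I b i = (\<lambda>k. {k}) ` Lset I b i
     \<union> (if fst b - Lset I b i = {} then {} else {fst b - Lset I b i})"

definition Tin :: "('n, 'k) mcnd \<Rightarrow> ('n, 'k) dispersion \<Rightarrow> 'n \<Rightarrow> 'k set set" where
  "Tin I b i = {snd b (j, i) | j. j \<in> inN I i \<and> snd b (j, i) \<noteq> {}}"

definition Tout :: "('n, 'k) mcnd \<Rightarrow> ('n, 'k) dispersion \<Rightarrow> 'n \<Rightarrow> 'k set set" where
  "Tout I b i = {snd b (i, j) | j. j \<in> outN I i \<and> snd b (i, j) \<noteq> {}}"

text \<open>zin i b C D stands for z_{CD}^{ib} (C in Tin), zout i b D C for z_{DC}^{ib} (C in Tout).\<close>
definition pae_feasible :: "('n, 'k) mcnd \<Rightarrow> ('n, 'k) dispersion set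
    \<Rightarrow> ('n \<times> 'n \<Rightarrow> 'k set \<Rightarrow> real) \<Rightarrow> ('n \<times> 'n \<Rightarrow> real) \<Rightarrow> bool" where
  "pae_feasible I B x y \<longleftrightarrow> pa_feasible I B x y \<and>
   (\<exists>(zin :: 'n \<Rightarrow> ('n, 'k) dispersion \<Rightarrow> 'k set \<Rightarrow> 'k set \<Rightarrow> real)
     (zout :: 'n \<Rightarrow> ('n, 'k) dispersion \<Rightarrow> 'k set \<Rightarrow> 'k set \<Rightarrow> real).
     \<forall>b\<in>B. \<forall>i\<in>nodes I. Lset I b i \<noteq> {} \<longrightarrow>
       (\<forall>C\<in>Tin I b i. \<forall>D\<in>Mset I b i. C \<inter> D \<noteq> {} \<longrightarrow> zin i b C D \<ge> 0)
     \<and> (\<forall>D\<in>Mset I b i. \<forall>C\<in>Tout I b i. C \<inter> D \<noteq> {} \<longrightarrow> zout i b D C \<ge> 0)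
     \<and> (\<forall>D\<in>Mset I b i.
          (\<Sum>j\<in>{j\<in>outN I i. \<exists>k. D = {k} \<and> k \<in> disagg b (i, j)}. x (i, j) D)
        - (\<Sum>j\<in>{j\<in>inN I i. \<exists>k. D = {k} \<and> k \<in> disagg b (j, i)}. x (j, i) D)
        + (\<Sum>C\<in>{C\<in>Tout I b i. C \<inter> D \<noteq> {}}. zout i b D C)
        - (\<Sum>C\<in>{C\<in>Tin I b i. C \<inter> D \<noteq> {}}. zin i b C D)
        = (\<Sum>k\<in>D. rhs I k i))
     \<and> (\<forall>C\<in>Tin I b i.
          (\<Sum>D\<in>{D\<in>Mset I b i. C \<inter> D \<noteq> {}}. zin i b C D)
        - (\<Sum>j\<in>{j\<in>inN I i. snd b (j, i) = C}. x (j, i) C) = 0)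
     \<and> (\<forall>C\<in>Tout I b i.
          (\<Sum>j\<in>{j\<in>outN I i. snd b (i, j) = C}. x (i, j) C)
        - (\<Sum>D\<in>{D\<in>Mset I b i. C \<inter> D \<noteq> {}}. zout i b D C) = 0))"

definition pae_lp_opt :: "('n, 'k) mcnd \<Rightarrow> ('n, 'k) dispersion set \<Rightarrow> real" where
  "pae_lp_opt I B = Inf {pa_obj I B x y | x y. pae_feasible I B x y}"

end

theory Submission
  imports Defs "HOL-Library.Disjoint_Sets"
begin

(*
  A feasible design (x, y) of MCND yields a feasible point of each LP relaxation
  with the same cost. Keep y and send through each group D of G_b^{ij} the aggregated flow
  x_{ij}^D = sum of x_{ij}^k over k in D. The groups of a dispersion partition K_b and the
  dispersions partition K, so the PA constraints are sums of MCND constraints. The PAi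
  inequalities only compare x_{ij}^k with the flow of the group containing k, which is larger
  because x >= 0. For PAe, let z_{CD}^{ib} carry the flow of the commodities in C \<inter> D on the
  arcs at i aggregated as C; since M_b^i also partitions K_b, the z-equations for C hold, and the
  balance equation of D reduces to flow conservation of the commodities in D. All objectives are
  nonnegative, so each LP infimum is at most the cost of every feasible design.
*)

lemma outN_arc: "j \<in> outN I i \<Longrightarrow> (i, j) \<in> arcs I"
  by (simp add: outN_def)

lemma inN_arc: "j \<in> inN I i \<Longrightarrow> (j, i) \<in> arcs I"
  by (simp add: inN_def)

lemma finite_arcs: "wf_instance I \<Longrightarrow> finite (arcs I)"
  unfolding wf_instance_def by (meson finite_SigmaI finite_subset)

lemma finite_outN: "wf_instance I \<Longrightarrow> finite (outN I i)"
  unfolding outN_def by (rule finite_subset[of _ "snd ` arcs I"]) (force, simp add: finite_arcs)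

lemma finite_inN: "wf_instance I \<Longrightarrow> finite (inN I i)"
  unfolding inN_def by (rule finite_subset[of _ "fst ` arcs I"]) (force, simp add: finite_arcs)

lemma sum_partition_inter:
  assumes "finite A" "partition_on A P" "C \<subseteq> A"
  shows "(\<Sum>D\<in>{D\<in>P. C \<inter> D \<noteq> {}}. sum f (C \<inter> D)) = sum f C"
proof -
  have "finite P"
    using assms(1,2) by (rule finite_elements)
  then have "(\<Sum>D\<in>{D\<in>P. C \<inter> D \<noteq> {}}. sum f (C \<inter> D)) = (\<Sum>D\<in>P. sum f (C \<inter> D))"
    by (intro sum.mono_neutral_left) auto
  also have "\<dots> = (\<Sum>D\<in>P. sum (\<lambda>k. if k \<in> C then f k else 0) D)"
  proof (rule sum.cong)
    fix D assume "D \<in> P"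
    then have "D \<subseteq> A"
      using partition_onD1[OF assms(2)] by blast
    then have "finite D"
      using assms(1) by (rule finite_subset)
    then show "sum f (C \<inter> D) = sum (\<lambda>k. if k \<in> C then f k else 0) D"
      by (simp add: sum.inter_restrict[symmetric] Int_commute)
  qed simp
  also have "\<dots> = sum (\<lambda>k. if k \<in> C then f k else 0) A"
    using assms(1,2) by (rule sum.partition[symmetric])
  also have "\<dots> = sum f C"
    using assms(1,3) by (simp add: sum.inter_restrict[symmetric] Int_absorb1)
  finally show ?thesis .
qed

lemma partition_on_Gfam:
  assumes "snd b a \<subseteq> fst b"
  shows "partition_on (fst b) (Gfam b a)"
  using assms by (intro partition_onI) (auto simp: Gfam_def disagg_def disjnt_def split: if_splits)

lemma partition_on_Mset: "partition_on (fst b) (Mset I b i)"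
proof -
  have "Lset I b i \<subseteq> fst b"
    by (auto simp: Lset_def)
  then show ?thesis
    by (intro partition_onI) (auto simp: Mset_def disjnt_def split: if_splits)
qed

lemma Mset_inter:
  assumes "D \<in> Mset I b i" "A \<subseteq> Lset I b i"
  shows "D \<inter> A = (if \<exists>k. D = {k} \<and> k \<in> A then D else {})"
  using assms by (auto simp: Mset_def split: if_splits)

definition aggregate_flow :: "('k \<Rightarrow> 'n \<times> 'n \<Rightarrow> real) \<Rightarrow> 'n \<times> 'n \<Rightarrow> 'k set \<Rightarrow> real" where
  "aggregate_flow x a D = (\<Sum>k\<in>D. x k a)"

text \<open>With \<open>J = inN I i\<close> and \<open>e j = (j, i)\<close> this is the variable \<open>z\<^sub>C\<^sub>D\<^sup>i\<^sup>b\<close> of PAe, with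
  \<open>J = outN I i\<close> and \<open>e j = (i, j)\<close> the variable \<open>z\<^sub>D\<^sub>C\<^sup>i\<^sup>b\<close>.\<close>

definition transfer_flow :: "('k \<Rightarrow> 'n \<times> 'n \<Rightarrow> real) \<Rightarrow> ('n, 'k) dispersion \<Rightarrow> 'j set
    \<Rightarrow> ('j \<Rightarrow> 'n \<times> 'n) \<Rightarrow> 'k set \<Rightarrow> 'k set \<Rightarrow> real" where
  "transfer_flow x b J e C D = (\<Sum>j\<in>{j\<in>J. snd b (e j) = C}. aggregate_flow x (e j) (C \<inter> D))"

lemma sum_transfer_flow_Mset:
  assumes "finite (fst b)" "C \<subseteq> fst b"
  shows "(\<Sum>D\<in>{D\<in>Mset I b i. C \<inter> D \<noteq> {}}. transfer_flow x b J e C D)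
       = (\<Sum>j\<in>{j\<in>J. snd b (e j) = C}. aggregate_flow x (e j) C)"
proof -
  have "(\<Sum>D\<in>{D\<in>Mset I b i. C \<inter> D \<noteq> {}}. transfer_flow x b J e C D)
      = (\<Sum>j\<in>{j\<in>J. snd b (e j) = C}. \<Sum>D\<in>{D\<in>Mset I b i. C \<inter> D \<noteq> {}}. aggregate_flow x (e j) (C \<inter> D))"
    unfolding transfer_flow_def by (rule sum.swap)
  also have "\<dots> = (\<Sum>j\<in>{j\<in>J. snd b (e j) = C}. aggregate_flow x (e j) C)"
    unfolding aggregate_flow_def
    by (intro sum.cong refl sum_partition_inter[OF assms(1) partition_on_Mset assms(2)])
  finally show ?thesis .
qed

lemma sum_transfer_flow_groups:
  assumes "finite J"
  shows "(\<Sum>C\<in>{C\<in>{snd b (e j) |j. j \<in> J \<and> snd b (e j) \<noteq> {}}. C \<inter> D \<noteq> {}}. transfer_flow x b J e C D)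
       = (\<Sum>j\<in>J. aggregate_flow x (e j) (snd b (e j) \<inter> D))"
proof -
  let ?g = "\<lambda>j. snd b (e j)"
  let ?h = "\<lambda>j. aggregate_flow x (e j) (?g j \<inter> D)"
  let ?S = "{j\<in>J. ?g j \<noteq> {}}"
  have groups: "{?g j |j. j \<in> J \<and> ?g j \<noteq> {}} = ?g ` ?S"
    by auto
  have "(\<Sum>C\<in>{C\<in>?g ` ?S. C \<inter> D \<noteq> {}}. transfer_flow x b J e C D)
      = (\<Sum>C\<in>?g ` ?S. transfer_flow x b J e C D)"
    by (rule sum.mono_neutral_left) (use assms in \<open>auto simp: transfer_flow_def aggregate_flow_def\<close>)
  also have "\<dots> = (\<Sum>C\<in>?g ` ?S. sum ?h {j\<in>?S. ?g j = C})"
    by (rule sum.cong) (auto simp: transfer_flow_def intro!: sum.cong)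
  also have "\<dots> = sum ?h ?S"
    by (rule sum.group) (use assms in auto)
  also have "\<dots> = sum ?h J"
    by (rule sum.mono_neutral_left) (use assms in \<open>auto simp: aggregate_flow_def\<close>)
  finally show ?thesis
    unfolding groups .
qed

lemma sum_disaggregated_Mset:
  assumes "finite J" "D \<in> Mset I b i" "\<And>j. j \<in> J \<Longrightarrow> disagg b (e j) \<subseteq> Lset I b i"
  shows "(\<Sum>j\<in>{j\<in>J. \<exists>k. D = {k} \<and> k \<in> disagg b (e j)}. aggregate_flow x (e j) D)
       = (\<Sum>j\<in>J. aggregate_flow x (e j) (D \<inter> disagg b (e j)))"
  unfolding sum.inter_filter[OF assms(1)]
  by (rule sum.cong) (auto simp: Mset_inter[OF assms(2,3)] aggregate_flow_def)

lemma sum_disaggregated_plus_transfer_flow: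
  assumes "finite (fst b)" "finite J" "D \<in> Mset I b i"
    and "\<And>j. j \<in> J \<Longrightarrow> snd b (e j) \<subseteq> fst b"
    and "\<And>j. j \<in> J \<Longrightarrow> disagg b (e j) \<subseteq> Lset I b i"
  shows "(\<Sum>j\<in>{j\<in>J. \<exists>k. D = {k} \<and> k \<in> disagg b (e j)}. aggregate_flow x (e j) D)
       + (\<Sum>C\<in>{C\<in>{snd b (e j) |j. j \<in> J \<and> snd b (e j) \<noteq> {}}. C \<inter> D \<noteq> {}}. transfer_flow x b J e C D)
       = (\<Sum>j\<in>J. aggregate_flow x (e j) D)"
proof -
  have "D \<subseteq> fst b"
    using assms(3) partition_onD1[OF partition_on_Mset[of b I i]] by blast
  then have "finite D"
    using assms(1) by (rule finite_subset)
  have split: "aggregate_flow x (e j) D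
      = aggregate_flow x (e j) (D \<inter> disagg b (e j)) + aggregate_flow x (e j) (snd b (e j) \<inter> D)"
    if "j \<in> J" for j
  proof -
    have "aggregate_flow x (e j) D
        = aggregate_flow x (e j) (D \<inter> snd b (e j)) + aggregate_flow x (e j) (D - snd b (e j))"
      unfolding aggregate_flow_def by (rule sum.Int_Diff[OF \<open>finite D\<close>])
    moreover have "D \<inter> disagg b (e j) = D - snd b (e j)" "snd b (e j) \<inter> D = D \<inter> snd b (e j)"
      using \<open>D \<subseteq> fst b\<close> by (auto simp: disagg_def)
    ultimately show ?thesis
      by (metis add.commute)
  qed
  have "(\<Sum>j\<in>{j\<in>J. \<exists>k. D = {k} \<and> k \<in> disagg b (e j)}. aggregate_flow x (e j) D)
      = (\<Sum>j\<in>J. aggregate_flow x (e j) (D \<inter> disagg b (e j)))"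
    by (rule sum_disaggregated_Mset) (use assms in auto)
  moreover have "(\<Sum>j\<in>J. aggregate_flow x (e j) D)
      = (\<Sum>j\<in>J. aggregate_flow x (e j) (D \<inter> disagg b (e j)))
      + (\<Sum>j\<in>J. aggregate_flow x (e j) (snd b (e j) \<inter> D))"
    unfolding sum.distrib[symmetric] by (rule sum.cong) (simp_all add: split)
  ultimately show ?thesis
    unfolding sum_transfer_flow_groups[OF assms(2)] by linarith
qed

lemma partial_aggregation_unique:
  assumes "partial_aggregation I B" "b \<in> B" "b' \<in> B" "k \<in> fst b" "k \<in> fst b'"
  shows "b = b'"
proof -
  have "k \<in> comms I"
    using assms(1,2,4) by (auto simp: partial_aggregation_def is_dispersion_def)
  then have "\<exists>!b. b \<in> B \<and> k \<in> fst b"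
    using assms(1) by (simp add: partial_aggregation_def)
  then show ?thesis
    using assms(2-5) by blast
qed

lemma inj_on_fst_partial_aggregation:
  assumes "partial_aggregation I B"
  shows "inj_on fst B"
proof (rule inj_onI)
  fix b b' assume b: "b \<in> B" "b' \<in> B" "fst b = fst b'"
  have "fst b \<noteq> {}"
    using assms b(1) by (simp add: partial_aggregation_def is_dispersion_def)
  then obtain k where "k \<in> fst b"
    by blast
  then show "b = b'"
    using partial_aggregation_unique[OF assms b(1,2)] b(3) by simp
qed

lemma partition_on_partial_aggregation:
  assumes "partial_aggregation I B"
  shows "partition_on (comms I) (fst ` B)"
proof (rule partition_onI)
  have dispersions: "\<And>b. b \<in> B \<Longrightarrow> fst b \<noteq> {} \<and> fst b \<subseteq> comms I"
    using assms by (simp add: partial_aggregation_def is_dispersion_def)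
  have "\<And>k. k \<in> comms I \<Longrightarrow> \<exists>b\<in>B. k \<in> fst b"
    using assms by (metis partial_aggregation_def)
  with dispersions show "\<Union>(fst ` B) = comms I"
    by blast
  show "{} \<notin> fst ` B"
    using dispersions by force
  show "disjnt p q" if parts: "p \<in> fst ` B" "q \<in> fst ` B" and "p \<noteq> q" for p q
  proof -
    obtain b b' where "b \<in> B" "b' \<in> B" "p = fst b" "q = fst b'"
      using parts by blast
    then show ?thesis
      using \<open>p \<noteq> q\<close> partial_aggregation_unique[OF assms, of b b'] by (auto simp: disjnt_def)
  qed
qed

lemma sum_partial_aggregation:
  assumes "wf_instance I" "partial_aggregation I B"
  shows "(\<Sum>b\<in>B. \<Sum>k\<in>fst b. g k) = (\<Sum>k\<in>comms I. g k)"
proof -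
  have "(\<Sum>b\<in>B. \<Sum>k\<in>fst b. g k) = (\<Sum>K\<in>fst ` B. \<Sum>k\<in>K. g k)"
    using sum.reindex[OF inj_on_fst_partial_aggregation[OF assms(2)], of "\<lambda>K. \<Sum>k\<in>K. g k"]
    by simp
  also have "\<dots> = (\<Sum>k\<in>comms I. g k)"
    using assms by (intro sum.partition[symmetric] partition_on_partial_aggregation)
      (simp_all add: wf_instance_def)
  finally show ?thesis .
qed

locale aggregated_design =
  fixes I :: "('n, 'k) mcnd" and B :: "('n, 'k) dispersion set"
    and x :: "'k \<Rightarrow> 'n \<times> 'n \<Rightarrow> real" and y :: "'n \<times> 'n \<Rightarrow> real"
  assumes wf: "wf_instance I"
    and aggregation: "partial_aggregation I B"
    and feasible: "mcnd_feasible I x y"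
begin

lemma dispersion_subset_comms: "b \<in> B \<Longrightarrow> fst b \<subseteq> comms I"
  using aggregation by (simp add: partial_aggregation_def is_dispersion_def)

lemma finite_dispersion: "b \<in> B \<Longrightarrow> finite (fst b)"
  using dispersion_subset_comms wf by (meson finite_subset wf_instance_def)

lemma aggregated_subset_dispersion: "b \<in> B \<Longrightarrow> a \<in> arcs I \<Longrightarrow> snd b a \<subseteq> fst b"
  using aggregation by (simp add: partial_aggregation_def is_dispersion_def)

lemma flow_nonneg: "k \<in> comms I \<Longrightarrow> a \<in> arcs I \<Longrightarrow> 0 \<le> x k a"
  using feasible by (simp add: mcnd_feasible_def)

lemma aggregate_flow_nonneg: "D \<subseteq> comms I \<Longrightarrow> a \<in> arcs I \<Longrightarrow> 0 \<le> aggregate_flow x a D"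
  unfolding aggregate_flow_def by (meson flow_nonneg subsetD sum_nonneg)

lemma aggregate_flow_conservation:
  assumes "D \<subseteq> comms I" "i \<in> nodes I"
  shows "(\<Sum>j\<in>outN I i. aggregate_flow x (i, j) D) - (\<Sum>j\<in>inN I i. aggregate_flow x (j, i) D)
       = (\<Sum>k\<in>D. rhs I k i)"
proof -
  have "(\<Sum>j\<in>outN I i. aggregate_flow x (i, j) D) - (\<Sum>j\<in>inN I i. aggregate_flow x (j, i) D)
      = (\<Sum>k\<in>D. (\<Sum>j\<in>outN I i. x k (i, j)) - (\<Sum>j\<in>inN I i. x k (j, i)))"
    unfolding aggregate_flow_def
    by (simp add: sum_subtractf sum.swap[of _ "outN I i"] sum.swap[of _ "inN I i"])
  also have "\<dots> = (\<Sum>k\<in>D. rhs I k i)"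
    using feasible assms by (intro sum.cong) (auto simp: mcnd_feasible_def)
  finally show ?thesis .
qed

lemma flowb_aggregate_flow:
  "b \<in> B \<Longrightarrow> a \<in> arcs I \<Longrightarrow> flowb b a (aggregate_flow x) = aggregate_flow x a (fst b)"
  unfolding flowb_def aggregate_flow_def
  by (intro sum.partition[symmetric] finite_dispersion partition_on_Gfam aggregated_subset_dispersion)

lemma sum_flowb_aggregate_flow:
  "a \<in> arcs I \<Longrightarrow> (\<Sum>b\<in>B. flowb b a (aggregate_flow x)) = (\<Sum>k\<in>comms I. x k a)"
  using sum_partial_aggregation[OF wf aggregation]
  by (simp add: flowb_aggregate_flow aggregate_flow_def)

lemma pa_obj_aggregate_flow: "pa_obj I B (aggregate_flow x) y = mcnd_cost I x y"
  unfolding pa_obj_def mcnd_cost_def by (simp add: sum_flowb_aggregate_flow)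

lemma pa_feasible_aggregate_flow: "pa_feasible I B (aggregate_flow x) y"
  unfolding pa_feasible_def
proof (intro conjI ballI)
  fix a assume a: "a \<in> arcs I"
  show "0 \<le> y a" "y a \<le> 1"
    using feasible a by (auto simp: mcnd_feasible_def)
  show "(\<Sum>b\<in>B. flowb b a (aggregate_flow x)) \<le> cap I a * y a"
    using feasible a by (simp add: sum_flowb_aggregate_flow mcnd_feasible_def)
  fix b D assume b: "b \<in> B" and D: "D \<in> Gfam b a"
  have "D \<subseteq> comms I"
    using partition_onD1[OF partition_on_Gfam[OF aggregated_subset_dispersion[OF b a]]] D
      dispersion_subset_comms[OF b] by blast
  then show "0 \<le> aggregate_flow x a D"
    using a by (rule aggregate_flow_nonneg)
  show "aggregate_flow x a D \<le> (\<Sum>k\<in>D. dem I k) * y a"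
    unfolding aggregate_flow_def sum_distrib_right
    using feasible a \<open>D \<subseteq> comms I\<close> by (intro sum_mono) (auto simp: mcnd_feasible_def)
next
  fix b i assume b: "b \<in> B" and i: "i \<in> nodes I"
  then show "(\<Sum>j\<in>outN I i. flowb b (i, j) (aggregate_flow x))
      - (\<Sum>j\<in>inN I i. flowb b (j, i) (aggregate_flow x)) = (\<Sum>k\<in>fst b. rhs I k i)"
    using aggregate_flow_conservation[OF dispersion_subset_comms[OF b] i]
    by (simp add: flowb_aggregate_flow outN_def inN_def)
qed

lemma singleton_part_le_flow:
  assumes "b \<in> B" "a \<in> arcs I" "k \<in> fst b"
  shows "(\<Sum>D\<in>{D\<in>Gfam b a. D = {k}}. aggregate_flow x a D) \<le> x k a"
proof -
  have "{D\<in>Gfam b a. D = {k}} = (if {k} \<in> Gfam b a then {{k}} else {})"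
    by auto
  moreover have "0 \<le> x k a"
    using assms dispersion_subset_comms flow_nonneg by blast
  ultimately show ?thesis
    by (simp add: aggregate_flow_def)
qed

lemma flow_le_containing_part:
  assumes b: "b \<in> B" and a: "a \<in> arcs I" and k: "k \<in> fst b"
  shows "x k a \<le> (\<Sum>D\<in>{D\<in>Gfam b a. k \<in> D}. aggregate_flow x a D)"
proof -
  have partition: "partition_on (fst b) (Gfam b a)"
    using aggregated_subset_dispersion[OF b a] by (rule partition_on_Gfam)
  then obtain D0 where D0: "D0 \<in> Gfam b a" "k \<in> D0"
    using k partition_onD1 by blast
  have parts: "D \<subseteq> comms I" "finite D" if "D \<in> Gfam b a" for D
    using that partition_onD1[OF partition] dispersion_subset_comms[OF b] finite_dispersion[OF b]
    by (auto intro: finite_subset)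
  have "x k a \<le> aggregate_flow x a D0"
    unfolding aggregate_flow_def
    using D0 parts[OF D0(1)] a by (intro member_le_sum flow_nonneg) auto
  also have "\<dots> \<le> (\<Sum>D\<in>{D\<in>Gfam b a. k \<in> D}. aggregate_flow x a D)"
    using D0 parts a aggregate_flow_nonneg finite_elements[OF finite_dispersion[OF b] partition]
    by (intro member_le_sum) auto
  finally show ?thesis .
qed

lemma pai_feasible_aggregate_flow: "pai_feasible I B (aggregate_flow x) y"
  unfolding pai_feasible_def
proof (intro conjI ballI pa_feasible_aggregate_flow)
  fix b k i assume b: "b \<in> B" and k: "k \<in> fst b" and i: "i \<in> nodes I"
  have conservation: "(\<Sum>j\<in>outN I i. x k (i, j)) - (\<Sum>j\<in>inN I i. x k (j, i)) = rhs I k i"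
    using feasible i k dispersion_subset_comms[OF b] by (auto simp: mcnd_feasible_def)
  note bounds = flow_le_containing_part[OF b _ k] singleton_part_le_flow[OF b _ k]
  have "(\<Sum>j\<in>outN I i. x k (i, j)) - (\<Sum>j\<in>inN I i. x k (j, i))
     \<le> (\<Sum>j\<in>outN I i. \<Sum>D\<in>{D\<in>Gfam b (i, j). k \<in> D}. aggregate_flow x (i, j) D)
      - (\<Sum>j\<in>inN I i. \<Sum>D\<in>{D\<in>Gfam b (j, i). D = {k}}. aggregate_flow x (j, i) D)"
    by (intro diff_mono sum_mono bounds) (simp_all add: outN_arc inN_arc)
  then show "rhs I k i \<le> (\<Sum>j\<in>outN I i. \<Sum>D\<in>{D\<in>Gfam b (i, j). k \<in> D}. aggregate_flow x (i, j) D)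
      - (\<Sum>j\<in>inN I i. \<Sum>D\<in>{D\<in>Gfam b (j, i). D = {k}}. aggregate_flow x (j, i) D)"
    using conservation by simp
  have "(\<Sum>j\<in>outN I i. \<Sum>D\<in>{D\<in>Gfam b (i, j). D = {k}}. aggregate_flow x (i, j) D)
      - (\<Sum>j\<in>inN I i. \<Sum>D\<in>{D\<in>Gfam b (j, i). k \<in> D}. aggregate_flow x (j, i) D)
     \<le> (\<Sum>j\<in>outN I i. x k (i, j)) - (\<Sum>j\<in>inN I i. x k (j, i))"
    by (intro diff_mono sum_mono bounds) (simp_all add: outN_arc inN_arc)
  then show "(\<Sum>j\<in>outN I i. \<Sum>D\<in>{D\<in>Gfam b (i, j). D = {k}}. aggregate_flow x (i, j) D)
      - (\<Sum>j\<in>inN I i. \<Sum>D\<in>{D\<in>Gfam b (j, i). k \<in> D}. aggregate_flow x (j, i) D) \<le> rhs I k i"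
    using conservation by simp
qed

lemma transfer_flow_nonneg:
  assumes b: "b \<in> B" and arcs: "\<And>j. j \<in> J \<Longrightarrow> e j \<in> arcs I"
  shows "0 \<le> transfer_flow x b J e C D"
  unfolding transfer_flow_def
proof (intro sum_nonneg aggregate_flow_nonneg)
  fix j assume "j \<in> {j\<in>J. snd b (e j) = C}"
  then show "e j \<in> arcs I" "C \<inter> D \<subseteq> comms I"
    using arcs aggregated_subset_dispersion[OF b] dispersion_subset_comms[OF b] by blast+
qed

lemma transfer_flow_Tin_balance:
  assumes b: "b \<in> B" and C: "C \<in> Tin I b i"
  shows "(\<Sum>D\<in>{D\<in>Mset I b i. C \<inter> D \<noteq> {}}. transfer_flow x b (inN I i) (\<lambda>j. (j, i)) C D)
       = (\<Sum>j\<in>{j\<in>inN I i. snd b (j, i) = C}. aggregate_flow x (j, i) C)"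
proof (rule sum_transfer_flow_Mset[OF finite_dispersion[OF b]])
  show "C \<subseteq> fst b"
    using C aggregated_subset_dispersion[OF b] by (auto simp: Tin_def inN_def)
qed

lemma transfer_flow_Tout_balance:
  assumes b: "b \<in> B" and C: "C \<in> Tout I b i"
  shows "(\<Sum>D\<in>{D\<in>Mset I b i. C \<inter> D \<noteq> {}}. transfer_flow x b (outN I i) (\<lambda>j. (i, j)) C D)
       = (\<Sum>j\<in>{j\<in>outN I i. snd b (i, j) = C}. aggregate_flow x (i, j) C)"
proof (rule sum_transfer_flow_Mset[OF finite_dispersion[OF b]])
  show "C \<subseteq> fst b"
    using C aggregated_subset_dispersion[OF b] by (auto simp: Tout_def outN_def)
qed

lemma Mset_node_balance:
  assumes b: "b \<in> B" and i: "i \<in> nodes I" and D: "D \<in> Mset I b i"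
  shows "(\<Sum>j\<in>{j\<in>outN I i. \<exists>k. D = {k} \<and> k \<in> disagg b (i, j)}. aggregate_flow x (i, j) D)
       - (\<Sum>j\<in>{j\<in>inN I i. \<exists>k. D = {k} \<and> k \<in> disagg b (j, i)}. aggregate_flow x (j, i) D)
       + (\<Sum>C\<in>{C\<in>Tout I b i. C \<inter> D \<noteq> {}}. transfer_flow x b (outN I i) (\<lambda>j. (i, j)) C D)
       - (\<Sum>C\<in>{C\<in>Tin I b i. C \<inter> D \<noteq> {}}. transfer_flow x b (inN I i) (\<lambda>j. (j, i)) C D)
       = (\<Sum>k\<in>D. rhs I k i)"
proof -
  have outgoing: "snd b (i, j) \<subseteq> fst b" "disagg b (i, j) \<subseteq> Lset I b i" if "j \<in> outN I i" for j
    using that aggregated_subset_dispersion[OF b] by (auto simp: outN_def Lset_def disagg_def)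
  have incoming: "snd b (j, i) \<subseteq> fst b" "disagg b (j, i) \<subseteq> Lset I b i" if "j \<in> inN I i" for j
    using that aggregated_subset_dispersion[OF b] by (auto simp: inN_def Lset_def disagg_def)
  have "D \<subseteq> comms I"
    using D partition_onD1[OF partition_on_Mset[of b I i]] dispersion_subset_comms[OF b] by blast
  note out_balance = sum_disaggregated_plus_transfer_flow[where J = "outN I i" and e = "\<lambda>j. (i, j)" and x = x,
      OF finite_dispersion[OF b] finite_outN[OF wf] D outgoing]
  note in_balance = sum_disaggregated_plus_transfer_flow[where J = "inN I i" and e = "\<lambda>j. (j, i)" and x = x,
      OF finite_dispersion[OF b] finite_inN[OF wf] D incoming]
  show ?thesis
    using out_balance in_balance aggregate_flow_conservation[OF \<open>D \<subseteq> comms I\<close> i]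
    unfolding Tin_def Tout_def by linarith
qed

lemma pae_feasible_aggregate_flow: "pae_feasible I B (aggregate_flow x) y"
proof -
  let ?zin = "\<lambda>i b C D. transfer_flow x b (inN I i) (\<lambda>j. (j, i)) C D"
  let ?zout = "\<lambda>i b D C. transfer_flow x b (outN I i) (\<lambda>j. (i, j)) C D"
  show ?thesis
    unfolding pae_feasible_def
    by (intro conjI pa_feasible_aggregate_flow, rule exI[of _ ?zin], rule exI[of _ ?zout],
        intro ballI impI conjI)
      (simp_all add: transfer_flow_nonneg Mset_node_balance transfer_flow_Tin_balance
        transfer_flow_Tout_balance inN_arc outN_arc)
qed

end

lemma pa_obj_nonneg:
  assumes "wf_instance I" "pa_feasible I B x y"
  shows "0 \<le> pa_obj I B x y"
  using assms unfolding pa_obj_def pa_feasible_def wf_instance_def flowb_def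
  by (intro add_nonneg_nonneg sum_nonneg mult_nonneg_nonneg) auto

lemma lp_relaxation_le_mcnd_opt:
  assumes "wf_instance I" "\<exists>x y. mcnd_feasible I x y" "partial_aggregation I B"
    and relaxes_pa: "\<And>x y. P x y \<Longrightarrow> pa_feasible I B x y"
    and contains_aggregation: "\<And>x y. aggregated_design I B x y \<Longrightarrow> P (aggregate_flow x) y"
  shows "Inf {pa_obj I B x y | x y. P x y} \<le> mcnd_opt I"
  unfolding mcnd_opt_def
proof (rule cInf_greatest)
  show "{mcnd_cost I x y | x y. mcnd_feasible I x y} \<noteq> {}"
    using assms(2) by blast
  fix c assume "c \<in> {mcnd_cost I x y | x y. mcnd_feasible I x y}"
  then obtain x y where "mcnd_feasible I x y" and c: "c = mcnd_cost I x y"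
    by blast
  then interpret aggregated_design I B x y
    using assms(1,3) by unfold_locales
  have "c \<in> {pa_obj I B x y | x y. P x y}"
    using contains_aggregation[OF aggregated_design_axioms]
    unfolding c pa_obj_aggregate_flow[symmetric] by blast
  moreover have "bdd_below {pa_obj I B x y | x y. P x y}"
    using pa_obj_nonneg[OF assms(1) relaxes_pa] by (intro bdd_belowI[of _ 0]) blast
  ultimately show "Inf {pa_obj I B x y | x y. P x y} \<le> c"
    by (rule cInf_lower)
qed

theorem corollary1:
  fixes I :: "('n, 'k) mcnd" and B :: "('n, 'k) dispersion set"
  assumes "wf_instance I"
    and "\<exists>x y. mcnd_feasible I x y"
    and "partial_aggregation I B"
  shows "pa_lp_opt I B \<le> mcnd_opt I \<and> pai_lp_opt I B \<le> mcnd_opt I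
         \<and> pae_lp_opt I B \<le> mcnd_opt I"
proof (intro conjI)
  show "pa_lp_opt I B \<le> mcnd_opt I"
    unfolding pa_lp_opt_def using assms
    by (rule lp_relaxation_le_mcnd_opt) (use aggregated_design.pa_feasible_aggregate_flow in auto)
  show "pai_lp_opt I B \<le> mcnd_opt I"
    unfolding pai_lp_opt_def using assms
    by (rule lp_relaxation_le_mcnd_opt)
      (use aggregated_design.pai_feasible_aggregate_flow in \<open>auto simp: pai_feasible_def\<close>)
  show "pae_lp_opt I B \<le> mcnd_opt I"
    unfolding pae_lp_opt_def using assms
    by (rule lp_relaxation_le_mcnd_opt)
      (use aggregated_design.pae_feasible_aggregate_flow in \<open>auto simp: pae_feasible_def\<close>)
qed

end
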